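(* For every integer $m\ge1$: $D_{-m}(C(t);n)=0$ for $1\le n\le m$, and for $n\ge m+1$ $$D_{-m}(C(t);n)=(-1)^{\binom{m+1}{2}}\,t^{\,n-m-1}\,D_{m+1}(C(t);n-m-1)$$ as an identity of polynomials in $t$.
   Context: The Narayana polynomials are $C_0(t)=1$ and $C_n(t)=\sum_{k=0}^{n-1}\binom{n-1}{k}\binom{n}{k}\frac{1}{k+1}t^k$ for $n\ge1$; they are extended by $C_n(t)=0$ for $n<0$. Their generating function $\sum_{n\ge0}C_n(t)x^n$ equals $\frac{1+x(t-1)-\sqrt{1-2x(t+1)+x^2(t-1)^2}}{2tx}$. For $m\in\mathbb Z$ and $n\ge0$, $D_m(C(t);n)=\det(C_{i+j+m}(t))_{i,j=0}^{n-1}$, the $0\times0$ determinant being $1$. *)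

theory Defs
  imports "HOL-Computational_Algebra.Polynomial" "Jordan_Normal_Form.Determinant"
begin

definition narayana :: "int \<Rightarrow> rat poly" where
  "narayana n = (if n < 0 then 0 else if n = 0 then 1 else
     (\<Sum>k = 0..nat n - 1. monom (of_nat ((nat n - 1) choose k) * of_nat (nat n choose k)
                                   / of_nat (k + 1)) k))"

text \<open>Hankel determinant D_m(C(t);n) = det (C_{i+j+m}(t))_{i,j=0}^{n-1}; the 0x0 determinant is 1.\<close>
definition hankel_det :: "int \<Rightarrow> nat \<Rightarrow> rat poly" where
  "hankel_det m n = det (mat n n (\<lambda>(i, j). narayana (int i + int j + m)))"

end

theory Submission
  imports Defs "HOL-Computational_Algebra.Formal_Power_Series"
begin

text \<open>
  The Narayana polynomials satisfy \<open>(n+3) C(n+2) = (2n+3)(1+t) C(n+1) - n (1-t)^2 C(n)\<close>, a first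
  order linear differential equation for their generating function \<open>A\<close>. It forces
  \<open>Q = t x A^2 - (1 + (t-1) x) A + 1\<close>, which vanishes at \<open>x = 0\<close>, to satisfy a homogeneous
  linear differential equation, hence \<open>Q = 0\<close>: the series \<open>G = 1 + (t-1) x - t x A\<close>, with
  coefficients \<open>1, -1, -t C(1), -t C(2), ...\<close>, is the inverse of \<open>A\<close>.
  Multiplying the Hankel matrix \<open>(C(i+j-m))\<close> from the left by the unitriangular Toeplitz matrix
  \<open>(G(i-k))\<close> turns its first \<open>m+1\<close> columns into an anti-diagonal of ones and its lower right
  block into \<open>t\<close> times \<open>(C(i+j+m+1))\<close> times the unitriangular Toeplitz matrix \<open>(C(j-i))\<close>;
  expanding along the anti-diagonal produces the sign. For \<open>n \<le> m\<close> the first row of the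
  Hankel matrix vanishes.
\<close>

no_notation vec_index (infixl \<open>$\<close> 100)
notation fps_nth (infixl \<open>$\<close> 75)

section \<open>Coefficients and the three-term recurrence\<close>

definition falling :: "'a::comm_ring_1 \<Rightarrow> nat \<Rightarrow> 'a" where
  "falling a k = (\<Prod>i<k. a - of_nat i)"

lemma falling_Suc: "falling a (Suc k) = falling a k * (a - of_nat k)"
  by (simp add: falling_def)

lemma falling_Suc_shift: "falling (a + 1) (Suc k) = (a + 1) * falling a k"
  unfolding falling_def prod.lessThan_Suc_shift by (simp add: algebra_simps)

lemma of_nat_binomial_eq_falling:
  "(of_nat (n choose k) :: 'a::field_char_0) = falling (of_nat n) k / fact k"
  by (simp add: binomial_gbinomial gbinomial_prod_rev falling_def atLeast0LessThan)

definition narayana_coeff :: "'a::field_char_0 \<Rightarrow> nat \<Rightarrow> 'a" where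
  "narayana_coeff a k = falling a k * falling (a + 1) k / (fact k * fact k * of_nat (k + 1))"

lemma narayana_0 [simp]: "narayana 0 = 1"
  and narayana_1 [simp]: "narayana 1 = 1"
  by (simp_all add: narayana_def)

lemma narayana_negative [simp]: "z < 0 \<Longrightarrow> narayana z = 0"
  by (simp add: narayana_def)

lemma coeff_narayana:
  assumes "n \<ge> 1"
  shows "coeff (narayana (int n)) k = narayana_coeff (of_nat n - 1) k"
proof -
  have "coeff (narayana (int n)) k =
      (if k \<in> {0..n - 1} then of_nat ((n - 1) choose k) * of_nat (n choose k) / of_nat (k + 1) else 0)"
    using assms by (simp add: narayana_def coeff_sum coeff_monom sum.delta)
  also have "\<dots> = of_nat ((n - 1) choose k) * of_nat (n choose k) / of_nat (k + 1)"
    by auto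
  finally show ?thesis
    using assms by (simp add: narayana_coeff_def of_nat_binomial_eq_falling of_nat_diff)
qed

lemma falling_products_recurrence:
  fixes y :: "'a::comm_ring_1" and j :: nat
  defines "E \<equiv> \<lambda>a k. falling a k * falling (a + 1) k" and "J \<equiv> of_nat j :: 'a"
  shows "(y + 4) * E (y + 2) (j + 3) =
    (2 * y + 5) * (E (y + 1) (j + 3) + (J + 3) * (J + 4) * E (y + 1) (j + 2))
    - (y + 1) * (E y (j + 3) - 2 * (J + 3) * (J + 4) * E y (j + 2)
                 + (J + 2) * (J + 3)^2 * (J + 4) * E y (j + 1))"
proof -
  have shift2: "falling (y + 2) (Suc k) = (y + 2) * falling (y + 1) k" for k
    using falling_Suc_shift[of "y + 1" k] by (simp add: add.assoc)
  have shift3: "falling (y + 3) (Suc k) = (y + 3) * falling (y + 2) k" for k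
    using falling_Suc_shift[of "y + 2" k] by (simp add: add.assoc)
  have shifts: "y + 1 + 1 = y + 2" "y + 2 + 1 = y + 3"
    by simp_all
  show ?thesis
    unfolding E_def J_def shifts numeral_3_eq_3 numeral_2_eq_2 One_nat_def add_Suc_right add_0_right
    apply (simp only: shift3)
    apply (simp only: shift2)
    apply (simp only: falling_Suc_shift)
    apply (simp only: falling_Suc)
    by (simp add: algebra_simps power2_eq_square)
qed

lemma narayana_coeff_recurrence:
  fixes y :: "'a::field_char_0"
  shows "(y + 4) * narayana_coeff (y + 2) (j + 3) =
    (2 * y + 5) * (narayana_coeff (y + 1) (j + 3) + narayana_coeff (y + 1) (j + 2))
    - (y + 1) * (narayana_coeff y (j + 3) - 2 * narayana_coeff y (j + 2) + narayana_coeff y (j + 1))"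
proof -
  define E where "E a k = falling a k * falling (a + 1) k" for a :: 'a and k
  define d :: "nat \<Rightarrow> 'a" where "d k = fact k * fact k * of_nat (k + 1)" for k
  define J where "J = (of_nat j :: 'a)"
  have coeff_eq: "narayana_coeff a k = E a k / d k" for a k
    by (simp add: narayana_coeff_def E_def d_def)
  have d_nonzero: "d k \<noteq> 0" for k
    unfolding d_def using of_nat_neq_0[of k, where 'a = 'a] by simp
  have J_shift_nonzero: "J + of_nat i \<noteq> 0" if "i > 0" for i
    using that unfolding J_def of_nat_add[symmetric] of_nat_eq_0_iff by simp
  have "J + 2 \<noteq> 0" "J + 3 \<noteq> 0" "J + 4 \<noteq> 0"
    using J_shift_nonzero[of 2] J_shift_nonzero[of 3] J_shift_nonzero[of 4] by simp_all
  moreover have "d (j + 3) = (J + 3) * (J + 4) * d (j + 2)"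
    and "d (j + 3) = (J + 2) * (J + 3)^2 * (J + 4) * d (j + 1)"
    by (simp_all add: d_def J_def numeral_3_eq_3 numeral_2_eq_2 algebra_simps power2_eq_square)
  ultimately have "narayana_coeff a (j + 2) = (J + 3) * (J + 4) * E a (j + 2) / d (j + 3)"
    and "narayana_coeff a (j + 1) = (J + 2) * (J + 3)^2 * (J + 4) * E a (j + 1) / d (j + 3)"
    and "narayana_coeff a (j + 3) = E a (j + 3) / d (j + 3)" for a
    by (simp_all add: coeff_eq d_nonzero)
  then show ?thesis
    using falling_products_recurrence[of y j] unfolding E_def[abs_def] J_def[symmetric]
    by (simp only: times_divide_eq_right add_divide_distrib[symmetric] diff_divide_distrib[symmetric]
      mult.assoc)
qed

lemma narayana_coeff_recurrence_low:
  fixes y :: "'a::field_char_0"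
  shows "(y + 4) * narayana_coeff (y + 2) 0 = (2 * y + 5) * narayana_coeff (y + 1) 0 - (y + 1) * narayana_coeff y 0"
    and "(y + 4) * narayana_coeff (y + 2) 1 =
      (2 * y + 5) * (narayana_coeff (y + 1) 1 + narayana_coeff (y + 1) 0)
      - (y + 1) * (narayana_coeff y 1 - 2 * narayana_coeff y 0)"
    and "(y + 4) * narayana_coeff (y + 2) 2 =
      (2 * y + 5) * (narayana_coeff (y + 1) 2 + narayana_coeff (y + 1) 1)
      - (y + 1) * (narayana_coeff y 2 - 2 * narayana_coeff y 1 + narayana_coeff y 0)"
  by (simp_all add: narayana_coeff_def falling_def numeral_2_eq_2 field_simps)

lemma narayana_recurrence:
  "of_nat (m + 3) * narayana (int m + 2) =
     of_nat (2 * m + 3) * ([:1, 1:] * narayana (int m + 1))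
     - of_nat m * ([:1, -2, 1:] * narayana (int m))"
proof (cases "m = 0")
  case True
  have "narayana 2 = [:1, 1:]"
    by (simp add: narayana_def numeral_2_eq_2 monom_Suc one_pCons)
  then show ?thesis
    using True by (simp add: algebra_simps)
next
  case False
  define y :: rat where "y = of_nat m - 1"
  have coeff_m: "coeff (narayana (int m)) k = narayana_coeff y k" for k
    using False coeff_narayana[of m] by (simp add: y_def)
  have coeff_m1: "coeff (narayana (int m + 1)) k = narayana_coeff (y + 1) k" for k
    using coeff_narayana[of "m + 1", unfolded of_nat_add of_nat_1] by (simp add: y_def)
  have coeff_m2: "coeff (narayana (int m + 2)) k = narayana_coeff (y + 2) k" for k
    using coeff_narayana[of "m + 2", unfolded of_nat_add of_nat_numeral] by (simp add: y_def)
  have factors: "(of_nat (m + 3) :: rat) = y + 4" "(of_nat (2 * m + 3) :: rat) = 2 * y + 5"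
    "(of_nat m :: rat) = y + 1"
    by (simp_all add: y_def)
  have coeff_of_nat_mult: "coeff (of_nat c * p) k = of_nat c * coeff p k" for c k and p :: "rat poly"
    by (simp add: of_nat_mult_conv_smult)
  show ?thesis
  proof (rule poly_eqI)
    fix k :: nat
    have "k = 0 \<or> k = 1 \<or> k = 2 \<or> (\<exists>j. k = j + 3)"
      by presburger
    then consider "k = 0" | "k = 1" | "k = 2" | j where "k = j + 3"
      by blast
    then have "(y + 4) * coeff (narayana (int m + 2)) k =
      (2 * y + 5) * coeff ([:1, 1:] * narayana (int m + 1)) k
      - (y + 1) * coeff ([:1, -2, 1:] * narayana (int m)) k"
    proof cases
      case 4
      then show ?thesis
        using narayana_coeff_recurrence[of y j]
        by (simp add: numeral_3_eq_3 numeral_2_eq_2 coeff_m coeff_m1 coeff_m2)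
    qed (use narayana_coeff_recurrence_low[of y] in
           \<open>simp_all add: numeral_2_eq_2 One_nat_def coeff_m coeff_m1 coeff_m2\<close>)
    then show "coeff (of_nat (m + 3) * narayana (int m + 2)) k =
      coeff (of_nat (2 * m + 3) * ([:1, 1:] * narayana (int m + 1))
             - of_nat m * ([:1, -2, 1:] * narayana (int m))) k"
      by (simp only: coeff_diff coeff_of_nat_mult factors)
  qed
qed

section \<open>The generating function and its inverse\<close>

lemma fps_mult_nth_eq_nth_0_mult:
  fixes f g :: "'a::semiring_0 fps"
  assumes "\<And>j. j < n \<Longrightarrow> g $ j = 0"
  shows "(f * g) $ n = f $ 0 * g $ n"
proof -
  have "(f * g) $ n = f $ 0 * g $ (n - 0) + (\<Sum>i = Suc 0..n. f $ i * g $ (n - i))"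
    unfolding fps_mult_nth by (rule sum.atLeast_Suc_atMost) simp
  also have "(\<Sum>i = Suc 0..n. f $ i * g $ (n - i)) = 0"
    using assms by (intro sum.neutral) auto
  finally show ?thesis
    by simp
qed

lemma fps_linear_ode_unique:
  fixes F P L :: "'a::{idom, ring_char_0} fps"
  assumes ode: "fps_X * P * fps_deriv F = L * F"
    and "F $ 0 = 0" and "P $ 0 = 1" and "L $ 0 = -1"
  shows "F = 0"
proof (rule fps_ext)
  fix n
  show "F $ n = 0 $ n"
  proof (induction n rule: less_induct)
    case (less n)
    show ?case
    proof (cases n)
      case 0
      with \<open>F $ 0 = 0\<close> show ?thesis
        by simp
    next
      case (Suc k)
      have "fps_deriv F $ j = 0" if "j < k" for j
        using less.IH[of "Suc j"] that Suc by simp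
      then have "(fps_X * P * fps_deriv F) $ n = of_nat n * F $ n"
        using fps_mult_nth_eq_nth_0_mult[of k "fps_deriv F" P] \<open>P $ 0 = 1\<close> Suc
        by (simp add: mult.assoc)
      moreover have "(L * F) $ n = - F $ n"
        using fps_mult_nth_eq_nth_0_mult[of n F L] less.IH \<open>L $ 0 = -1\<close> by simp
      ultimately have "of_nat n * F $ n = - F $ n"
        by (metis ode)
      then have "of_nat (Suc n) * F $ n = 0"
        by (simp add: algebra_simps)
      then show ?thesis
        by (simp only: mult_eq_0_iff of_nat_eq_0_iff) simp
    qed
  qed
qed

definition narayana_fps :: "rat poly fps" where
  "narayana_fps = Abs_fps (\<lambda>n. narayana (int n))"

lemma narayana_fps_nth [simp]: "narayana_fps $ n = narayana (int n)"
  by (simp add: narayana_fps_def)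

lemma narayana_recurrence_deriv_form:
  "of_nat (m + 2) * narayana (int m + 2) - [:2, 2:] * (of_nat (m + 1) * narayana (int m + 1))
     + [:1, -2, 1:] * (of_nat m * narayana (int m))
   = - narayana (int m + 2) + [:1, 1:] * narayana (int m + 1)"
proof -
  have rearrange: "of_nat (m + 2) * c2 - (p + p) * (of_nat (m + 1) * c1) + q * (of_nat m * c0)
      - (- c2 + p * c1) = of_nat (m + 3) * c2 - (of_nat (2 * m + 3) * (p * c1) - of_nat m * (q * c0))"
    for c0 c1 c2 p q :: "rat poly"
    by (simp add: algebra_simps)
  have "[:2, 2:] = [:1, 1:] + [:1, 1 :: rat:]"
    by simp
  then have "of_nat (m + 2) * narayana (int m + 2) - [:2, 2:] * (of_nat (m + 1) * narayana (int m + 1))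
      + [:1, -2, 1:] * (of_nat m * narayana (int m)) - (- narayana (int m + 2) + [:1, 1:] * narayana (int m + 1))
    = of_nat (m + 3) * narayana (int m + 2) - (of_nat (2 * m + 3) * ([:1, 1:] * narayana (int m + 1))
      - of_nat m * ([:1, -2, 1:] * narayana (int m)))"
    by (simp only: rearrange)
  then show ?thesis
    unfolding narayana_recurrence[of m] by simp
qed

lemma narayana_fps_ode:
  "fps_X * (1 - fps_const [:2, 2:] * fps_X + fps_const [:1, -2, 1:] * fps_X^2) * fps_deriv narayana_fps =
     1 + fps_const [:1, -1:] * fps_X - (1 - fps_const [:1, 1:] * fps_X) * narayana_fps"
    (is "?lhs = ?rhs")
proof (rule fps_ext)
  fix n :: nat
  define D where "D = fps_deriv narayana_fps"
  have lhs: "?lhs = fps_X * D - fps_const [:2, 2:] * (fps_X^2 * D) + fps_const [:1, -2, 1:] * (fps_X^3 * D)"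
    by (simp add: D_def algebra_simps power2_eq_square power3_eq_cube)
  have "n = 0 \<or> n = 1 \<or> (\<exists>m. n = m + 2)"
    by presburger
  then consider "n = 0" | "n = 1" | m where "n = m + 2"
    by blast
  then show "?lhs $ n = ?rhs $ n"
  proof cases
    case 1
    then show ?thesis
      by (simp add: lhs)
  next
    case 2
    have "?lhs $ 1 = 1"
      by (simp add: lhs D_def fps_X_power_mult_nth)
    moreover have "?rhs $ 1 = [:1, -1:] - (1 - [:1, 1:])"
      by simp
    moreover have "[:1, -1:] - (1 - [:1, 1:]) = (1 :: rat poly)"
      by (simp add: one_pCons)
    ultimately show ?thesis
      using 2 by simp
  next
    case 3
    have "(fps_X * D) $ (m + 2) = of_nat (m + 2) * narayana (int m + 2)"
      by (simp add: D_def add_ac)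
    moreover have "(fps_X^2 * D) $ (m + 2) = of_nat (m + 1) * narayana (int m + 1)"
      by (simp add: D_def fps_X_power_mult_nth add_ac)
    moreover have "(fps_X^3 * D) $ (m + 2) = of_nat m * narayana (int m)"
      by (cases m) (simp_all add: D_def fps_X_power_mult_nth add_ac)
    ultimately have "?lhs $ n = of_nat (m + 2) * narayana (int m + 2)
        - [:2, 2:] * (of_nat (m + 1) * narayana (int m + 1)) + [:1, -2, 1:] * (of_nat m * narayana (int m))"
      unfolding lhs 3 fps_sub_nth fps_add_nth fps_mult_left_const_nth by simp
    also have "\<dots> = ?rhs $ n"
      unfolding narayana_recurrence_deriv_form using 3 by (simp add: left_diff_distrib mult.assoc add_ac)
    finally show ?thesis .
  qed
qed

lemma narayana_fps_quadratic:
  "fps_const [:0, 1:] * fps_X * narayana_fps^2 - (1 + fps_const [:-1, 1:] * fps_X) * narayana_fps + 1 = 0"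
proof -
  define A where "A = narayana_fps"
  define D where "D = fps_deriv A"
  define X :: "rat poly fps" where "X = fps_X"
  define T where "T = fps_const [:0, 1 :: rat:]"
  define P where "P = 1 - fps_const [:2, 2:] * X + fps_const [:1, -2, 1:] * X^2"
  have "[:1, 1:] = t + 1" "[:-1, 1:] = t - 1" "[:1, -1:] = 1 - t" "[:2, 2:] = (t + 1) + (t + 1)"
    "[:1, -2, 1:] = (t - 1) * (t - 1)" if "t = [:0, 1 :: rat:]" for t
    using that by (simp_all add: one_pCons)
  then have T_plus_1: "fps_const [:1, 1:] = T + 1"
    and T_minus_1: "fps_const [:-1, 1:] = T - 1"
    and one_minus_T: "fps_const [:1, -1:] = 1 - T"
    and two_T_plus_1: "fps_const [:2, 2:] = (T + 1) + (T + 1)"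
    and T_minus_1_squared: "fps_const [:1, -2, 1:] = (T - 1) * (T - 1)"
    unfolding T_def
    by (simp_all only: fps_const_add[symmetric] fps_const_sub[symmetric] fps_const_mult[symmetric]
        fps_const_1_eq_1)
  have ode: "X * P * D = 1 + (1 - T) * X - (1 - (T + 1) * X) * A"
    using narayana_fps_ode unfolding A_def D_def X_def P_def one_minus_T T_plus_1 .
  define Q where "Q = T * X * A^2 - (1 + (T - 1) * X) * A + 1"
  have deriv_Q: "fps_deriv Q = T * A^2 + 2 * T * X * A * D - (T - 1) * A - (1 + (T - 1) * X) * D"
    by (simp add: Q_def D_def X_def T_def algebra_simps power2_eq_square)
  have "X * P * fps_deriv Q = T * X * P * A^2 - (T - 1) * X * P * A
      + (2 * T * X * A - (1 + (T - 1) * X)) * (X * P * D)"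
    unfolding deriv_Q by (simp add: algebra_simps)
  also have "\<dots> = ((T - 1) * (T - 1) * X^2 - 1) * Q"
    unfolding ode unfolding P_def two_T_plus_1 T_minus_1_squared Q_def
    by (simp add: algebra_simps power2_eq_square)
  finally have "fps_X * P * fps_deriv Q = ((T - 1) * (T - 1) * X^2 - 1) * Q"
    by (simp add: X_def)
  then have "Q = 0"
    by (rule fps_linear_ode_unique) (simp_all add: Q_def P_def X_def A_def T_def power2_eq_square)
  then show ?thesis
    by (simp add: Q_def A_def X_def T_def T_minus_1)
qed

definition narayana_fps_inverse :: "rat poly fps" where
  "narayana_fps_inverse = 1 + fps_const [:-1, 1:] * fps_X - fps_const [:0, 1:] * fps_X * narayana_fps"

lemma narayana_fps_inverse_mult: "narayana_fps_inverse * narayana_fps = 1"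
proof -
  have "narayana_fps_inverse * narayana_fps = 1 -
      (fps_const [:0, 1:] * fps_X * narayana_fps^2 - (1 + fps_const [:-1, 1:] * fps_X) * narayana_fps + 1)"
    by (simp add: narayana_fps_inverse_def algebra_simps power2_eq_square)
  then show ?thesis
    by (simp only: narayana_fps_quadratic diff_zero)
qed

lemma narayana_fps_inverse_nth_0 [simp]: "narayana_fps_inverse $ 0 = 1"
  by (simp add: narayana_fps_inverse_def)

lemma narayana_fps_inverse_nth_Suc_Suc:
  "narayana_fps_inverse $ Suc (Suc k) = - [:0, 1:] * narayana (int k + 1)"
  by (simp add: narayana_fps_inverse_def mult.assoc add.commute)

section \<open>Hankel determinants\<close>

lemma fps_mult_nth_split:
  fixes f g :: "'a::semiring_0 fps"
  shows "(f * g) $ (k + s) =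
    (\<Sum>l\<le>k. f $ (k - l) * g $ (l + s)) + (\<Sum>r<s. f $ (k + 1 + r) * g $ (s - 1 - r))"
proof -
  have "(f * g) $ (k + s) = (\<Sum>i = 0..k. f $ i * g $ (k + s - i)) + (\<Sum>i = k + 1..k + s. f $ i * g $ (k + s - i))"
    unfolding fps_mult_nth by (rule sum.ub_add_nat) simp
  also have "(\<Sum>i = 0..k. f $ i * g $ (k + s - i)) = (\<Sum>l = 0..k. f $ (k - l) * g $ (l + s))"
    by (subst sum.atLeastAtMost_rev) (rule sum.cong, auto)
  also have "(\<Sum>i = k + 1..k + s. f $ i * g $ (k + s - i)) = (\<Sum>r = 0..<s. f $ (k + 1 + r) * g $ (s - 1 - r))"
  proof -
    have "{k + 1..k + s} = {0 + (k + 1)..<s + (k + 1)}"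
      by auto
    then show ?thesis
      by (simp only: sum.shift_bounds_nat_ivl) (rule sum.cong, auto simp: add_ac)
  qed
  finally show ?thesis
    by (simp add: atLeast0AtMost atLeast0LessThan)
qed

lemma narayana_fps_inverse_conv_shifted:
  "(\<Sum>l\<le>k. narayana_fps_inverse $ (k - l) * narayana (int l - int d)) = (if k = d then 1 else 0)"
proof -
  have "(fps_X^d * narayana_fps) $ l = narayana (int l - int d)" for l
    by (simp add: fps_X_power_mult_nth of_nat_diff)
  then have "(\<Sum>l\<le>k. narayana_fps_inverse $ (k - l) * narayana (int l - int d))
      = (fps_X^d * narayana_fps * narayana_fps_inverse) $ k"
    unfolding fps_mult_nth[of "fps_X^d * narayana_fps"] atLeast0AtMost by (simp add: mult.commute)
  also have "\<dots> = (fps_X^d :: rat poly fps) $ k"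
    by (simp add: mult.assoc mult.commute[of narayana_fps] narayana_fps_inverse_mult)
  finally show ?thesis
    by simp
qed

lemma narayana_fps_inverse_conv_tail:
  assumes "1 \<le> k"
  shows "(\<Sum>l\<le>k. narayana_fps_inverse $ (k - l) * narayana (int l + int b + 1)) =
    [:0, 1:] * (\<Sum>r\<le>b. narayana (int k + int r) * narayana (int b - int r))"
proof -
  have "(narayana_fps_inverse * narayana_fps) $ (k + (b + 1)) = 0"
    by (simp add: narayana_fps_inverse_mult)
  then have "(\<Sum>l\<le>k. narayana_fps_inverse $ (k - l) * narayana (int l + int b + 1)) =
      - (\<Sum>r<b + 1. narayana_fps_inverse $ (k + 1 + r) * narayana (int (b - r)))"
    unfolding fps_mult_nth_split by (simp add: add_ac eq_neg_iff_add_eq_0)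
  also have "\<dots> = - (\<Sum>r\<le>b. - ([:0, 1:] * (narayana (int k + int r) * narayana (int b - int r))))"
  proof -
    have "narayana_fps_inverse $ (k + 1 + r) = - [:0, 1:] * narayana (int k + int r)" for r
      using narayana_fps_inverse_nth_Suc_Suc[of "k - 1 + r"] assms by (simp add: of_nat_diff)
    then show ?thesis
      unfolding lessThan_Suc_atMost Suc_eq_plus1[symmetric]
      by (intro arg_cong[where f = uminus] sum.cong) (simp_all add: of_nat_diff)
  qed
  finally show ?thesis
    by (simp only: sum_negf minus_minus sum_distrib_left)
qed

lemma det_mat_lower_toeplitz:
  "det (mat n n (\<lambda>(i, l). if l \<le> i then g (i - l) else 0)) = (g 0 :: 'a::comm_ring_1) ^ n"
proof -
  have "det (mat n n (\<lambda>(i, l). if l \<le> i then g (i - l) else 0)) =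
      prod_list (diag_mat (mat n n (\<lambda>(i, l). if l \<le> i then g (i - l) else 0)))"
    by (rule det_lower_triangular[of n]) auto
  then show ?thesis
    by (simp add: prod_list_diag_prod)
qed

lemma det_mat_upper_toeplitz:
  assumes "\<And>z. z < 0 \<Longrightarrow> c z = 0"
  shows "det (mat n n (\<lambda>(i, j). c (int j - int i))) = (c 0 :: 'a::comm_ring_1) ^ n"
proof -
  have "det (mat n n (\<lambda>(i, j). c (int j - int i))) = prod_list (diag_mat (mat n n (\<lambda>(i, j). c (int j - int i))))"
    by (rule det_upper_triangular[of _ n]) (use assms in \<open>auto simp: upper_triangular_def\<close>)
  then show ?thesis
    by (simp add: prod_list_diag_prod)
qed

lemma mat_lower_toeplitz_mult_index:
  assumes "k < n" and "j < n"
  shows "(mat n n (\<lambda>(i, l). if l \<le> i then g (i - l) else 0) * mat n n h) $$ (k, j) =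
    (\<Sum>l\<le>k. (g (k - l) :: 'a::comm_ring_1) * h (l, j))"
proof -
  have "(mat n n (\<lambda>(i, l). if l \<le> i then g (i - l) else 0) * mat n n h) $$ (k, j) =
      (\<Sum>l<n. if l \<le> k then g (k - l) * h (l, j) else 0)"
    using assms by (auto simp: scalar_prod_def atLeast0LessThan intro!: sum.cong)
  also have "\<dots> = (\<Sum>l\<le>k. g (k - l) * h (l, j))"
    using assms by (intro sum.mono_neutral_cong_right) auto
  finally show ?thesis .
qed

lemma mat_mult_upper_toeplitz_index:
  assumes "a < n" and "b < n" and "\<And>z. z < 0 \<Longrightarrow> c z = 0"
  shows "(mat n n h * mat n n (\<lambda>(i, j). c (int j - int i))) $$ (a, b) =
    (\<Sum>r\<le>b. (h (a, r) :: 'a::comm_ring_1) * c (int b - int r))"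
  using assms by (simp add: scalar_prod_def atLeast0LessThan, intro sum.mono_neutral_cong_right) auto

lemma det_leading_anti_identity_columns:
  fixes M :: "'a::comm_ring_1 mat"
  assumes "M \<in> carrier_mat N N" and "p \<le> N"
    and "\<And>k j. k < N \<Longrightarrow> j < p \<Longrightarrow> M $$ (k, j) = (if k + j + 1 = p then 1 else 0)"
  shows "det M = (-1)^(p choose 2) * det (mat (N - p) (N - p) (\<lambda>(a, b). M $$ (p + a, p + b)))"
  using assms
proof (induction p arbitrary: N M)
  case 0
  then have "mat (N - 0) (N - 0) (\<lambda>(a, b). M $$ (0 + a, 0 + b)) = M"
    by (intro eq_matI) auto
  then show ?case
    by (simp add: binomial_eq_0)
next
  case (Suc p)
  obtain N' where N': "N = Suc N'"
    using Suc.prems(2) by (cases N) auto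
  define M' where "M' = mat_delete M p 0"
  \<comment> \<open>the first column has its only nonzero entry, a one, in row \<open>p\<close>\<close>
  have "det M = (\<Sum>i<N. M $$ (i, 0) * cofactor M i 0)"
    by (rule laplace_expansion_column[OF Suc.prems(1)]) (simp add: N')
  also have "\<dots> = cofactor M p 0"
    using Suc.prems(2,3) N' by (simp add: if_distrib[of "\<lambda>x. x * _"] sum.delta' cong: if_cong)
  finally have det_M: "det M = (-1)^p * det M'"
    by (simp add: cofactor_def M'_def)
  have M'_carrier: "M' \<in> carrier_mat N' N'"
    unfolding M'_def using mat_delete_carrier[OF Suc.prems(1)] N' by simp
  have M'_entry: "M' $$ (k, j) = M $$ (if k < p then k else Suc k, Suc j)" if "k < N'" "j < N'" for k j
    using that Suc.prems(1) N' by (simp add: M'_def mat_delete_def)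
  have "det M' = (-1)^(p choose 2) * det (mat (N' - p) (N' - p) (\<lambda>(a, b). M' $$ (p + a, p + b)))"
  proof (rule Suc.IH[OF M'_carrier])
    show "p \<le> N'"
      using Suc.prems(2) N' by simp
    show "M' $$ (k, j) = (if k + j + 1 = p then 1 else 0)" if "k < N'" "j < p" for k j
      using that M'_entry[of k j] Suc.prems(2) Suc.prems(3)[of k "Suc j"] Suc.prems(3)[of "Suc k" "Suc j"] N'
      by (cases "k < p") auto
  qed
  moreover have "mat (N' - p) (N' - p) (\<lambda>(a, b). M' $$ (p + a, p + b)) =
      mat (N - Suc p) (N - Suc p) (\<lambda>(a, b). M $$ (Suc p + a, Suc p + b))"
    by (intro eq_matI) (auto simp: M'_entry N')
  moreover have "(-1::'a)^p * (-1)^(p choose 2) = (-1)^(Suc p choose 2)"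
    by (simp add: numeral_2_eq_2 power_add[symmetric] add.commute)
  ultimately show ?case
    using det_M by (simp add: mult.assoc[symmetric])
qed

lemma hankel_det_neg_eq_0:
  assumes "1 \<le> n" and "n \<le> m"
  shows "hankel_det (- int m) n = 0"
proof -
  define H where "H = mat n n (\<lambda>(i, j). narayana (int i + int j + - int m))"
  \<comment> \<open>its first row vanishes\<close>
  have "det H = (\<Sum>j<n. H $$ (0, j) * cofactor H 0 j)"
    by (rule laplace_expansion_row) (use assms in \<open>auto simp: H_def\<close>)
  also have "\<dots> = 0"
    by (rule sum.neutral) (use assms in \<open>auto simp: H_def\<close>)
  finally show ?thesis
    by (simp add: hankel_det_def H_def)
qed

lemma hankel_det_neg_reduction:
  assumes "m + 1 \<le> n"
  shows "hankel_det (- int m) n =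
    (-1)^((m + 1) choose 2) * [:0, 1:]^(n - m - 1) * hankel_det (int m + 1) (n - m - 1)"
proof -
  define s where "s = n - (m + 1)"
  define G where "G = mat n n (\<lambda>(i, l). if l \<le> i then narayana_fps_inverse $ (i - l) else 0)"
  define H where "H = mat n n (\<lambda>(i, j). narayana (int i + int j + - int m))"
  define H' where "H' = mat s s (\<lambda>(i, j). narayana (int i + int j + (int m + 1)))"
  define U where "U = mat s s (\<lambda>(i, j). narayana (int j - int i))"
  have GH_carrier: "G * H \<in> carrier_mat n n"
    by (intro mult_carrier_mat[of _ n n]) (simp_all add: G_def H_def)
  have GH_index: "(G * H) $$ (k, j) =
      (\<Sum>l\<le>k. narayana_fps_inverse $ (k - l) * narayana (int l + int j - int m))"
    if "k < n" "j < n" for k j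
    using mat_lower_toeplitz_mult_index[OF that, where g = "\<lambda>i. narayana_fps_inverse $ i"
        and h = "\<lambda>(i, j). narayana (int i + int j - int m)"]
    by (simp add: G_def H_def)
  have "det H = det (G * H)"
    using det_mult[of G n H] det_mat_lower_toeplitz[of n "\<lambda>i. narayana_fps_inverse $ i"]
    by (simp add: G_def H_def)
  also have "\<dots> = (-1)^((m + 1) choose 2) * det (mat s s (\<lambda>(a, b). (G * H) $$ (m + 1 + a, m + 1 + b)))"
    unfolding s_def
  proof (rule det_leading_anti_identity_columns[OF GH_carrier assms])
    show "(G * H) $$ (k, j) = (if k + j + 1 = m + 1 then 1 else 0)" if "k < n" "j < m + 1" for k j
      using that assms GH_index[of k j] narayana_fps_inverse_conv_shifted[of k "m - j"]
      by (auto simp: of_nat_diff algebra_simps)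
  qed
  also have "mat s s (\<lambda>(a, b). (G * H) $$ (m + 1 + a, m + 1 + b)) = [:0, 1:] \<cdot>\<^sub>m (H' * U)"
  proof (rule eq_matI)
    fix a b
    assume "a < dim_row ([:0, 1:] \<cdot>\<^sub>m (H' * U))" "b < dim_col ([:0, 1:] \<cdot>\<^sub>m (H' * U))"
    then have "a < s" "b < s"
      by (simp_all add: H'_def U_def)
    then show "mat s s (\<lambda>(a, b). (G * H) $$ (m + 1 + a, m + 1 + b)) $$ (a, b) =
        ([:0, 1:] \<cdot>\<^sub>m (H' * U)) $$ (a, b)"
      using GH_index[of "m + 1 + a" "m + 1 + b"] narayana_fps_inverse_conv_tail[of "m + 1 + a" b]
        mat_mult_upper_toeplitz_index[of a s b narayana "\<lambda>(i, j). narayana (int i + int j + (int m + 1))"]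
      by (simp add: H'_def U_def s_def algebra_simps)
  qed (simp_all add: H'_def U_def)
  also have "det ([:0, 1:] \<cdot>\<^sub>m (H' * U)) = [:0, 1:]^s * det H'"
    using det_mult[of H' s U] det_mat_upper_toeplitz[of narayana s] by (simp add: H'_def U_def)
  finally show ?thesis
    by (simp add: hankel_det_def H_def H'_def s_def mult.assoc)
qed

theorem theorem8:
  fixes m :: nat
  assumes "m \<ge> 1"
  shows "(\<forall>n. 1 \<le> n \<and> n \<le> m \<longrightarrow> hankel_det (- int m) n = 0) \<and>
         (\<forall>n. n \<ge> m + 1 \<longrightarrow>
            hankel_det (- int m) n =
              (-1) ^ ((m + 1) choose 2) * [:0, 1:] ^ (n - m - 1) * hankel_det (int m + 1) (n - m - 1))"
  using hankel_det_neg_eq_0 hankel_det_neg_reduction by blast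

end
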